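(* Let $(M,d)$ be a complete metric space and $X\subseteq M$ compact. Assume that every $\mu\in P(X)$ admits a barycenter in $M$, that $conv(X)$ is compact, and that at least one variance maximizing $\mu\in P(X)$ has a unique barycenter. Let $R$ be the circumradius of $X$ and $y$ its circumcenter. Then $\max_{\mu\in P(X)}Var(\mu)=R^2$, and every variance maximizing $\mu$ gives full measure to $\partial B(y,R)=\{x\in M: d(x,y)=R\}$.
   Context: $P(\cdot)$ denotes Borel probability measures. $Var(\mu)=\inf_{y\in M}\int_X d^2(x,y)\,d\mu(x)$, a barycenter of $\mu$ is a point of $M$ attaining this infimum, and a variance maximizing measure is a maximizer of $Var$ over $P(X)$. $conv(X)$ is the set of all barycenters of measures in $P(X)$. The circumradius of $X$ is $R=\inf_{z\in M}\sup_{x\in X}d(x,z)$, and a circumcenter is a point $y\in M$ with $X\subseteq\bar B(y,R)$; under these hypotheses the circumcenter exists and is unique. *)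

theory Defs
  imports "HOL-Probability.Probability"
begin

text \<open>The complete metric space M is the whole type 'a (class complete_space).
  Borel probability measures on X are represented as Borel probability measures
  on M that are concentrated on X.\<close>

definition Pm :: "'a::metric_space set \<Rightarrow> 'a measure set" where
  "Pm X = {\<mu>. prob_space \<mu> \<and> sets \<mu> = sets (borel :: 'a measure) \<and> emeasure \<mu> X = 1}"

definition Var :: "'a::metric_space measure \<Rightarrow> real" where
  "Var \<mu> = (INF y. (\<integral>x. (dist x y)\<^sup>2 \<partial>\<mu>))"

definition barycenter :: "'a::metric_space measure \<Rightarrow> 'a \<Rightarrow> bool" where
  "barycenter \<mu> y \<longleftrightarrow> (\<integral>x. (dist x y)\<^sup>2 \<partial>\<mu>) = Var \<mu>"

definition var_max :: "'a::metric_space set \<Rightarrow> 'a measure \<Rightarrow> bool" where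
  "var_max X \<mu> \<longleftrightarrow> \<mu> \<in> Pm X \<and> (\<forall>\<nu>\<in>Pm X. Var \<nu> \<le> Var \<mu>)"

definition conv :: "'a::metric_space set \<Rightarrow> 'a set" where
  "conv X = {y. \<exists>\<mu>\<in>Pm X. barycenter \<mu> y}"

definition circumradius :: "'a::metric_space set \<Rightarrow> real" where
  "circumradius X = (INF z. SUP x\<in>X. dist x z)"

end

theory Submission
  imports Defs
begin

(*
  Let \<mu> maximise the variance, with unique barycenter b, and let x \<in> X. The measures
  \<nu>\<^sub>t = t \<delta>\<^sub>x + (1 - t) \<mu> lie in P(X), so with a barycenter z\<^sub>t of \<nu>\<^sub>t
    t d(x,z\<^sub>t)\<^sup>2 + (1 - t) \<integral>d(w,z\<^sub>t)\<^sup>2 d\<mu> = Var \<nu>\<^sub>t \<le> Var \<mu> \<le> \<integral>d(w,z\<^sub>t)\<^sup>2 d\<mu>,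
  which gives d(x,z\<^sub>t)\<^sup>2 \<le> Var \<mu> and (1 - t) \<integral>d(w,z\<^sub>t)\<^sup>2 d\<mu> \<le> Var \<mu>. As t \<rightarrow> 0 the z\<^sub>t
  accumulate in the compact set conv X at a point l with \<integral>d(w,l)\<^sup>2 d\<mu> \<le> Var \<mu>, i.e. at a
  barycenter of \<mu>; hence l = b and d(x,b)\<^sup>2 \<le> Var \<mu> for all x \<in> X. Thus X lies in the
  ball of radius sqrt (Var \<mu>) around b, so R\<^sup>2 \<le> Var \<mu>. Conversely every \<nu> \<in> P(X) has
  Var \<nu> \<le> \<integral>d(w,y)\<^sup>2 d\<nu> \<le> R\<^sup>2, with equality throughout for a maximiser, which forces
  d(w,y) = R for \<nu>-almost every w.
*)

lemma sets_Pm: "\<mu> \<in> Pm X \<Longrightarrow> sets \<mu> = sets borel"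
  by (simp add: Pm_def)

lemma space_Pm: "\<mu> \<in> Pm X \<Longrightarrow> space \<mu> = UNIV"
  using sets_eq_imp_space_eq[of \<mu> borel] by (simp add: Pm_def)

lemma prob_space_Pm: "\<mu> \<in> Pm X \<Longrightarrow> prob_space \<mu>"
  by (simp add: Pm_def)

lemma AE_in_Pm:
  assumes "\<mu> \<in> Pm X" "X \<in> sets borel"
  shows "AE w in \<mu>. w \<in> X"
proof -
  interpret prob_space \<mu> using assms(1) by (rule prob_space_Pm)
  show ?thesis
    using assms by (simp add: AE_in_set_eq_1 Pm_def measure_def)
qed

lemma Pm_nonempty: "\<mu> \<in> Pm X \<Longrightarrow> X \<noteq> {}"
  by (auto simp: Pm_def)

lemma borel_measurable_dist2 [measurable]: "(\<lambda>w. (dist w z)\<^sup>2) \<in> borel_measurable borel"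
  by (intro borel_measurable_continuous_onI continuous_intros)

lemma integrable_dist2_Pm:
  assumes "\<mu> \<in> Pm X" "X \<in> sets borel" "bounded X"
  shows "integrable \<mu> (\<lambda>w. (dist w z)\<^sup>2)"
proof -
  interpret prob_space \<mu> using assms(1) by (rule prob_space_Pm)
  obtain e where e: "\<forall>w\<in>X. dist z w \<le> e"
    using assms(3) bounded_any_center by blast
  have "AE w in \<mu>. norm ((dist w z)\<^sup>2) \<le> e\<^sup>2"
    using AE_in_Pm[OF assms(1,2)]
    by eventually_elim (use e in \<open>auto simp: dist_commute intro!: power_mono\<close>)
  then show ?thesis
    using sets_Pm[OF assms(1)] by (intro integrable_const_bound) auto
qed

lemma tendsto_integral_dist2:
  assumes "\<mu> \<in> Pm X" "X \<in> sets borel" "bounded X" "z \<longlonglongrightarrow> l"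
  shows "(\<lambda>n. \<integral>w. (dist w (z n))\<^sup>2 \<partial>\<mu>) \<longlonglongrightarrow> (\<integral>w. (dist w l)\<^sup>2 \<partial>\<mu>)"
proof -
  interpret prob_space \<mu> using assms(1) by (rule prob_space_Pm)
  have "bounded (X \<union> range z)"
    using assms(3) convergent_imp_bounded[OF assms(4)] by simp
  then obtain e where e: "\<forall>w\<in>X \<union> range z. dist l w \<le> e"
    using bounded_any_center by blast
  have bound: "dist w (z n) \<le> 2 * e" if "w \<in> X" for w n
  proof -
    have "dist l w \<le> e" "dist l (z n) \<le> e"
      using e that by auto
    then show ?thesis
      using dist_triangle3[of w "z n" l] by linarith
  qed
  have "AE w in \<mu>. norm ((dist w (z n))\<^sup>2) \<le> (2 * e)\<^sup>2" for n
    using AE_in_Pm[OF assms(1,2)]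
    by eventually_elim (metis abs_power2 bound power_mono real_norm_def zero_le_dist)
  moreover have "(\<lambda>n. (dist w (z n))\<^sup>2) \<longlonglongrightarrow> (dist w l)\<^sup>2" for w
    by (intro tendsto_intros assms(4))
  ultimately show ?thesis
    using sets_Pm[OF assms(1)]
    by (intro integral_dominated_convergence[where w = "\<lambda>_. (2 * e)\<^sup>2"]) auto
qed

lemma Var_le_integral: "Var \<mu> \<le> (\<integral>w. (dist w z)\<^sup>2 \<partial>\<mu>)"
  unfolding Var_def by (rule cINF_lower) (auto intro!: bdd_belowI[where m = 0])

lemma Var_nonneg: "0 \<le> Var \<mu>"
  unfolding Var_def by (rule cINF_greatest) auto

lemma nn_integral_bernoulli:
  "0 \<le> t \<Longrightarrow> t \<le> 1 \<Longrightarrow>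
    (\<integral>\<^sup>+b. g b \<partial>measure_pmf (bernoulli_pmf t)) = ennreal t * g True + ennreal (1 - t) * g False"
  by (simp add: nn_integral_measure_pmf nn_integral_count_space_finite UNIV_bool)

definition point_mixture :: "real \<Rightarrow> 'a::metric_space \<Rightarrow> 'a measure \<Rightarrow> 'a measure" where
  "point_mixture t x \<mu> = measure_pmf (bernoulli_pmf t) \<bind> (\<lambda>b. if b then return borel x else \<mu>)"

context
  fixes \<mu> :: "'a::metric_space measure"
  assumes prob: "prob_space \<mu>" and sets: "sets \<mu> = sets borel"
begin

private lemma point_mixture_kernel_measurable:
  "(\<lambda>b. if b then return borel x else \<mu>) \<in> measurable (measure_pmf (bernoulli_pmf t)) (subprob_algebra borel)"
  using prob sets by (auto simp: space_subprob_algebra subprob_space_return prob_space_imp_subprob_space)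

lemma sets_point_mixture: "sets (point_mixture t x \<mu>) = sets borel"
  unfolding point_mixture_def
  by (rule sets_bind[where N = borel]) (use sets in auto)

lemma emeasure_point_mixture:
  assumes "0 \<le> t" "t \<le> 1" "A \<in> sets borel"
  shows "emeasure (point_mixture t x \<mu>) A = ennreal t * indicator A x + ennreal (1 - t) * emeasure \<mu> A"
  unfolding point_mixture_def
  using assms sets
  by (subst emeasure_bind[OF _ point_mixture_kernel_measurable])
     (auto simp: nn_integral_bernoulli mult.commute)

lemma nn_integral_point_mixture:
  assumes "0 \<le> t" "t \<le> 1" "f \<in> borel_measurable borel"
  shows "(\<integral>\<^sup>+w. f w \<partial>point_mixture t x \<mu>) = ennreal t * f x + ennreal (1 - t) * (\<integral>\<^sup>+w. f w \<partial>\<mu>)"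
  unfolding point_mixture_def
  using assms sets
  by (subst nn_integral_bind[OF assms(3) point_mixture_kernel_measurable])
     (auto simp: nn_integral_bernoulli nn_integral_return mult.commute cong: nn_integral_cong_simp)

lemma integral_point_mixture:
  fixes f :: "'a \<Rightarrow> real"
  assumes "0 \<le> t" "t \<le> 1" "f \<in> borel_measurable borel" "integrable \<mu> f" "\<And>w. 0 \<le> f w"
  shows "(\<integral>w. f w \<partial>point_mixture t x \<mu>) = t * f x + (1 - t) * (\<integral>w. f w \<partial>\<mu>)"
proof -
  have "(\<integral>\<^sup>+w. ennreal (f w) \<partial>point_mixture t x \<mu>) = ennreal (t * f x + (1 - t) * (\<integral>w. f w \<partial>\<mu>))"
    using assms nn_integral_point_mixture[OF assms(1,2), of "\<lambda>w. ennreal (f w)"]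
    by (simp add: nn_integral_eq_integral ennreal_mult' ennreal_plus integral_nonneg_AE)
  moreover have "0 \<le> t * f x + (1 - t) * (\<integral>w. f w \<partial>\<mu>)"
    using assms by (simp add: integral_nonneg_AE)
  moreover have "f \<in> borel_measurable (point_mixture t x \<mu>)"
    using assms(3) measurable_cong_sets[OF sets_point_mixture refl] by blast
  ultimately show ?thesis
    by (simp add: integral_eq_nn_integral assms(5))
qed

end

lemma point_mixture_in_Pm:
  assumes "\<mu> \<in> Pm X" "0 \<le> t" "t \<le> 1" "x \<in> X" "X \<in> sets borel"
  shows "point_mixture t x \<mu> \<in> Pm X"
proof -
  note mix = sets_point_mixture[OF prob_space_Pm sets_Pm, OF assms(1) assms(1)]
    emeasure_point_mixture[OF prob_space_Pm sets_Pm, OF assms(1) assms(1) assms(2,3)]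
  have "ennreal t + ennreal (1 - t) = 1"
    using assms(2,3) by (simp flip: ennreal_plus)
  then have "emeasure (point_mixture t x \<mu>) UNIV = 1" "emeasure (point_mixture t x \<mu>) X = 1"
    using assms(1,4,5) prob_space.emeasure_space_1[OF prob_space_Pm[OF assms(1)]]
    by (simp_all add: mix space_Pm[OF assms(1)] Pm_def)
  then show ?thesis
    using mix sets_eq_imp_space_eq[OF mix(1)] by (auto simp: Pm_def intro!: prob_spaceI)
qed

lemma barycenter_point_mixture_bounds:
  assumes "var_max X \<mu>" "X \<in> sets borel" "bounded X" "x \<in> X" "0 < t" "t \<le> 1"
    and "barycenter (point_mixture t x \<mu>) z"
  shows "(dist x z)\<^sup>2 \<le> Var \<mu>" "(1 - t) * (\<integral>w. (dist w z)\<^sup>2 \<partial>\<mu>) \<le> Var \<mu>"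
proof -
  define I where "I = (\<integral>w. (dist w z)\<^sup>2 \<partial>\<mu>)"
  have \<mu>: "\<mu> \<in> Pm X"
    using assms(1) by (simp add: var_max_def)
  have "t * (dist x z)\<^sup>2 + (1 - t) * I = Var (point_mixture t x \<mu>)"
    using assms(5-7) integral_point_mixture[OF prob_space_Pm[OF \<mu>] sets_Pm[OF \<mu>]]
      integrable_dist2_Pm[OF \<mu> assms(2,3)]
    by (simp add: barycenter_def I_def)
  also have "\<dots> \<le> Var \<mu>"
    using assms(1,2,4-6) point_mixture_in_Pm[OF \<mu>] by (simp add: var_max_def)
  finally have mix_le: "t * (dist x z)\<^sup>2 + (1 - t) * I \<le> Var \<mu>" .
  have "(1 - t) * Var \<mu> \<le> (1 - t) * I"
    using assms(6) Var_le_integral[of \<mu> z] by (intro mult_left_mono) (auto simp: I_def)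
  then have "t * (dist x z)\<^sup>2 \<le> t * Var \<mu>"
    using mix_le by (simp add: algebra_simps)
  then show "(dist x z)\<^sup>2 \<le> Var \<mu>"
    using assms(5) by simp
  have "0 \<le> t * (dist x z)\<^sup>2"
    using assms(5) by simp
  then show "(1 - t) * I \<le> Var \<mu>"
    using mix_le by linarith
qed

lemma dist_le_Var_if_unique_barycenter:
  assumes "compact X" "\<forall>\<nu>\<in>Pm X. \<exists>c. barycenter \<nu> c" "compact (conv X)"
    and "var_max X \<mu>" "\<And>c. barycenter \<mu> c \<Longrightarrow> c = b" "x \<in> X"
  shows "(dist x b)\<^sup>2 \<le> Var \<mu>"
proof -
  define t where "t n = 1 / real (n + 2)" for n
  have t: "0 < t n" "t n \<le> 1" for n
    by (auto simp: t_def)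
  have "t \<longlonglongrightarrow> 0"
    unfolding t_def using LIMSEQ_ignore_initial_segment[OF lim_const_over_n[of 1], of 2]
    by (simp add: add.commute)
  have X: "X \<in> sets borel" "bounded X"
    using assms(1) by (auto intro: borel_closed compact_imp_closed compact_imp_bounded)
  have mix: "point_mixture (t n) x \<mu> \<in> Pm X" for n
    using assms(4,6) X t[of n] by (intro point_mixture_in_Pm) (auto simp: var_max_def)
  then have "\<forall>n. \<exists>c. barycenter (point_mixture (t n) x \<mu>) c"
    using assms(2) by blast
  then obtain z where z: "\<And>n. barycenter (point_mixture (t n) x \<mu>) (z n)"
    by metis
  then have "z n \<in> conv X" for n
    using mix unfolding conv_def by blast
  then obtain l r where r: "strict_mono r" and lim: "(z \<circ> r) \<longlonglongrightarrow> l"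
    using seq_compactE[OF compact_imp_seq_compact[OF assms(3)]] by metis
  note bounds = barycenter_point_mixture_bounds[OF assms(4) X assms(6) t z]
  have "(\<lambda>n. t (r n)) \<longlonglongrightarrow> 0"
    using LIMSEQ_subseq_LIMSEQ[OF \<open>t \<longlonglongrightarrow> 0\<close> r] by (simp add: comp_def)
  then have "(\<lambda>n. (1 - t (r n)) * (\<integral>w. (dist w ((z \<circ> r) n))\<^sup>2 \<partial>\<mu>))
      \<longlonglongrightarrow> (1 - 0) * (\<integral>w. (dist w l)\<^sup>2 \<partial>\<mu>)"
    using assms(4) X by (intro tendsto_intros tendsto_integral_dist2[OF _ _ _ lim])
      (auto simp: var_max_def)
  then have "(\<integral>w. (dist w l)\<^sup>2 \<partial>\<mu>) \<le> Var \<mu>"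
    using bounds(2) by (intro LIMSEQ_le_const2) auto
  then have "barycenter \<mu> l"
    using Var_le_integral[of \<mu> l] by (simp add: barycenter_def)
  then have "l = b"
    by (rule assms(5))
  have "(\<lambda>n. (dist x ((z \<circ> r) n))\<^sup>2) \<longlonglongrightarrow> (dist x l)\<^sup>2"
    by (intro tendsto_intros lim)
  then show ?thesis
    using bounds(1) \<open>l = b\<close> by (intro LIMSEQ_le_const2) auto
qed

lemma circumradius_le:
  assumes "X \<subseteq> cball z r" "X \<noteq> {}"
  shows "circumradius X \<le> r"
proof -
  have bdd: "bdd_above ((\<lambda>w. dist w c) ` X)" for c
    using bounded_subset[OF bounded_cball assms(1)] bounded_any_center[of X c]
    by (auto simp: bdd_above_def dist_commute)
  obtain w0 where "w0 \<in> X"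
    using assms(2) by blast
  then have "0 \<le> (SUP w\<in>X. dist w c)" for c
    using cSUP_upper[OF _ bdd] zero_le_dist order_trans by metis
  then have "circumradius X \<le> (SUP w\<in>X. dist w z)"
    unfolding circumradius_def by (intro cINF_lower bdd_belowI[where m = 0]) auto
  also have "\<dots> \<le> r"
    using assms by (intro cSUP_least) (auto simp: dist_commute)
  finally show ?thesis .
qed

lemma integral_dist2_le:
  assumes "\<nu> \<in> Pm X" "X \<in> sets borel" "X \<subseteq> cball y R"
  shows "(\<integral>w. (dist w y)\<^sup>2 \<partial>\<nu>) \<le> R\<^sup>2"
proof -
  interpret prob_space \<nu> using assms(1) by (rule prob_space_Pm)
  have "AE w in \<nu>. (dist w y)\<^sup>2 \<le> R\<^sup>2"
    using AE_in_Pm[OF assms(1,2)]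
    by eventually_elim (use assms(3) in \<open>auto simp: dist_commute intro!: power_mono\<close>)
  then have "(\<integral>w. (dist w y)\<^sup>2 \<partial>\<nu>) \<le> (\<integral>w. R\<^sup>2 \<partial>\<nu>)"
    using assms by (intro integral_mono_AE integrable_dist2_Pm) (auto intro: bounded_subset)
  then show ?thesis
    by (simp add: prob_space)
qed

lemma (in prob_space) AE_eq_if_integral_eq_upper_bound:
  fixes f :: "'a \<Rightarrow> real"
  assumes "integrable M f" "AE x in M. f x \<le> c" "integral\<^sup>L M f = c"
  shows "AE x in M. f x = c"
proof -
  have "integral\<^sup>L M (\<lambda>x. c - f x) = 0"
    using assms(1,3) by (simp add: prob_space)
  then have "AE x in M. c - f x = 0"
    using assms(1,2) by (subst (asm) integral_nonneg_eq_0_iff_AE) auto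
  then show ?thesis
    by eventually_elim simp
qed

lemma emeasure_sphere_eq_1_if_integral_dist2_eq:
  assumes "\<nu> \<in> Pm X" "X \<in> sets borel" "X \<subseteq> cball y R"
    and "(\<integral>w. (dist w y)\<^sup>2 \<partial>\<nu>) = R\<^sup>2"
  shows "emeasure \<nu> {x. dist x y = R} = 1"
proof -
  interpret prob_space \<nu> using assms(1) by (rule prob_space_Pm)
  have "0 \<le> R"
    using Pm_nonempty[OF assms(1)] assms(3) by (metis cball_eq_empty not_less subset_empty)
  have "AE w in \<nu>. (dist w y)\<^sup>2 \<le> R\<^sup>2"
    using AE_in_Pm[OF assms(1,2)]
    by eventually_elim (use assms(3) in \<open>auto simp: dist_commute intro!: power_mono\<close>)
  then have "AE w in \<nu>. (dist w y)\<^sup>2 = R\<^sup>2"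
    using assms by (intro AE_eq_if_integral_eq_upper_bound integrable_dist2_Pm)
      (auto intro: bounded_subset)
  then have "AE w in \<nu>. dist w y = R"
    by eventually_elim (use \<open>0 \<le> R\<close> in \<open>simp add: power2_eq_iff_nonneg\<close>)
  moreover have "{x. dist x y = R} \<in> events"
    using sets_Pm[OF assms(1)] by (auto intro!: borel_closed closed_Collect_eq continuous_intros)
  ultimately show ?thesis
    using AE_in_set_eq_1[of "{x. dist x y = R}"] by (simp add: emeasure_eq_measure)
qed

theorem corollary3p4:
  fixes X :: "'a::complete_space set" and y :: 'a
  assumes "compact X"
    and "\<forall>\<mu>\<in>Pm X. \<exists>b. barycenter \<mu> b"
    and "compact (conv X)"
    and "\<exists>\<mu>. var_max X \<mu> \<and> (\<exists>!b. barycenter \<mu> b)"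
    and "X \<subseteq> cball y (circumradius X)"
  shows "(\<exists>\<mu>. var_max X \<mu> \<and> Var \<mu> = (circumradius X)\<^sup>2)
    \<and> (\<forall>\<mu>. var_max X \<mu> \<longrightarrow> emeasure \<mu> {x. dist x y = circumradius X} = 1)"
proof -
  define R where "R = circumradius X"
  obtain \<mu> b where \<mu>: "var_max X \<mu>" and unique: "\<And>c. barycenter \<mu> c \<Longrightarrow> c = b"
    using assms(4) by metis
  have "\<mu> \<in> Pm X" and X: "X \<in> sets borel"
    using \<mu> assms(1) by (auto simp: var_max_def intro: borel_closed compact_imp_closed)
  have "X \<subseteq> cball b (sqrt (Var \<mu>))"
    using dist_le_Var_if_unique_barycenter[OF assms(1-3) \<mu> unique]
    by (auto simp: dist_commute intro!: real_le_rsqrt)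
  then have "R \<le> sqrt (Var \<mu>)"
    unfolding R_def using Pm_nonempty[OF \<open>\<mu> \<in> Pm X\<close>] by (rule circumradius_le)
  moreover have "0 \<le> R"
    using assms(5) Pm_nonempty[OF \<open>\<mu> \<in> Pm X\<close>] unfolding R_def
    by (metis cball_eq_empty not_less subset_empty)
  ultimately have "R\<^sup>2 \<le> Var \<mu>"
    using Var_nonneg[of \<mu>] by (metis power_mono real_sqrt_pow2)
  have upper: "Var \<nu> \<le> (\<integral>w. (dist w y)\<^sup>2 \<partial>\<nu>)" "(\<integral>w. (dist w y)\<^sup>2 \<partial>\<nu>) \<le> R\<^sup>2"
    if "\<nu> \<in> Pm X" for \<nu>
    using Var_le_integral integral_dist2_le[OF that X assms(5)[folded R_def]] .
  have "Var \<mu> = R\<^sup>2"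
    using upper[OF \<open>\<mu> \<in> Pm X\<close>] \<open>R\<^sup>2 \<le> Var \<mu>\<close> by linarith
  moreover have "emeasure \<nu> {x. dist x y = R} = 1" if "var_max X \<nu>" for \<nu>
  proof (rule emeasure_sphere_eq_1_if_integral_dist2_eq[OF _ X assms(5)[folded R_def]])
    show "\<nu> \<in> Pm X"
      using that by (simp add: var_max_def)
    then show "(\<integral>w. (dist w y)\<^sup>2 \<partial>\<nu>) = R\<^sup>2"
      using that upper[of \<nu>] \<open>\<mu> \<in> Pm X\<close> \<open>Var \<mu> = R\<^sup>2\<close> by (force simp: var_max_def)
  qed
  ultimately show ?thesis
    using \<mu> unfolding R_def by blast
qed

end
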